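(* Let $G$ be a graph that has at least one pair of distinct twin vertices and at least one isolated vertex, and let $T$ be a minimum twin cover of $G$. Then for every $t\ge1$, \[\det(\mu_t(G))=t|T|+\det(G)+t-1.\]
   Context: All graphs are finite and simple. For a graph $G$ with $V(G)=\{v_1,\dots,v_n\}$ and an integer $t\ge1$, the generalized Mycielskian $\mu_t(G)$ has vertex set $\{u_i^s: 1\le i\le n,\ 0\le s\le t\}\cup\{w\}$, where $u_i^0$ is identified with $v_i$. Its edges are: $u_i^0u_j^0$ for each edge $v_iv_j$ of $G$; $u_i^su_j^{s+1}$ and $u_j^su_i^{s+1}$ for each edge $v_iv_j$ of $G$ and each $0\le s<t$; and $u_i^tw$ for all $1\le i\le n$. A set $S\subseteq V(G)$ is a determining set for $G$ if the only automorphism of $G$ fixing every vertex of $S$ is the identity; $\det(G)$ is the minimum size of a determining set. Two vertices are twins if they have the same open neighborhood. A minimum twin cover of a graph is a subset of its vertices of minimum size that contains at least one vertex from every pair of distinct twin vertices; equivalently, it contains all but one vertex of each class of mutually twin vertices. *)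

theory Defs
  imports Main
begin

definition simple_graph :: "'a set \<Rightarrow> ('a \<Rightarrow> 'a \<Rightarrow> bool) \<Rightarrow> bool" where
  "simple_graph V E \<longleftrightarrow> finite V \<and> (\<forall>x y. E x y \<longrightarrow> x \<in> V \<and> y \<in> V)
     \<and> (\<forall>x y. E x y \<longrightarrow> E y x) \<and> (\<forall>x. \<not> E x x)"

definition automorphism :: "'a set \<Rightarrow> ('a \<Rightarrow> 'a \<Rightarrow> bool) \<Rightarrow> ('a \<Rightarrow> 'a) \<Rightarrow> bool" where
  "automorphism V E f \<longleftrightarrow> bij_betw f V V \<and> (\<forall>x\<in>V. \<forall>y\<in>V. E x y \<longleftrightarrow> E (f x) (f y))"

definition determining_set :: "'a set \<Rightarrow> ('a \<Rightarrow> 'a \<Rightarrow> bool) \<Rightarrow> 'a set \<Rightarrow> bool" where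
  "determining_set V E S \<longleftrightarrow> S \<subseteq> V \<and>
     (\<forall>f. automorphism V E f \<and> (\<forall>x\<in>S. f x = x) \<longrightarrow> (\<forall>x\<in>V. f x = x))"

definition det_num :: "'a set \<Rightarrow> ('a \<Rightarrow> 'a \<Rightarrow> bool) \<Rightarrow> nat" where
  "det_num V E = (LEAST n. \<exists>S. determining_set V E S \<and> card S = n)"

definition open_nbhd :: "'a set \<Rightarrow> ('a \<Rightarrow> 'a \<Rightarrow> bool) \<Rightarrow> 'a \<Rightarrow> 'a set" where
  "open_nbhd V E x = {y \<in> V. E x y}"

definition twins :: "'a set \<Rightarrow> ('a \<Rightarrow> 'a \<Rightarrow> bool) \<Rightarrow> 'a \<Rightarrow> 'a \<Rightarrow> bool" where
  "twins V E x y \<longleftrightarrow> x \<in> V \<and> y \<in> V \<and> open_nbhd V E x = open_nbhd V E y"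

definition twin_cover :: "'a set \<Rightarrow> ('a \<Rightarrow> 'a \<Rightarrow> bool) \<Rightarrow> 'a set \<Rightarrow> bool" where
  "twin_cover V E T \<longleftrightarrow> T \<subseteq> V \<and>
     (\<forall>x y. twins V E x y \<and> x \<noteq> y \<longrightarrow> x \<in> T \<or> y \<in> T)"

definition min_twin_cover :: "'a set \<Rightarrow> ('a \<Rightarrow> 'a \<Rightarrow> bool) \<Rightarrow> 'a set \<Rightarrow> bool" where
  "min_twin_cover V E T \<longleftrightarrow> twin_cover V E T \<and>
     (\<forall>T'. twin_cover V E T' \<longrightarrow> card T \<le> card T')"

definition isolated :: "'a set \<Rightarrow> ('a \<Rightarrow> 'a \<Rightarrow> bool) \<Rightarrow> 'a \<Rightarrow> bool" where
  "isolated V E x \<longleftrightarrow> x \<in> V \<and> (\<forall>y\<in>V. \<not> E x y)"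

text \<open>Generalized Mycielskian: vertex Some (v, s) is u_v^s (0 \<le> s \<le> t, Some (v,0) = v), None is w.\<close>
definition myc_verts :: "'a set \<Rightarrow> nat \<Rightarrow> ('a \<times> nat) option set" where
  "myc_verts V t = {Some (v, s) | v s. v \<in> V \<and> s \<le> t} \<union> {None}"

fun myc_edge :: "('a \<Rightarrow> 'a \<Rightarrow> bool) \<Rightarrow> 'a set \<Rightarrow> nat \<Rightarrow> ('a \<times> nat) option \<Rightarrow> ('a \<times> nat) option \<Rightarrow> bool" where
  "myc_edge E V t (Some (x, s)) (Some (y, r)) \<longleftrightarrow>
     E x y \<and> s \<le> t \<and> r \<le> t \<and> ((s = 0 \<and> r = 0) \<or> r = s + 1 \<or> s = r + 1)"
| "myc_edge E V t (Some (x, s)) None \<longleftrightarrow> x \<in> V \<and> s = t"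
| "myc_edge E V t None (Some (y, r)) \<longleftrightarrow> y \<in> V \<and> r = t"
| "myc_edge E V t None None \<longleftrightarrow> False"

end

theory Submission
  imports Defs "HOL-Combinatorics.Transposition"
begin

text \<open>
  An automorphism of mu_t(G) fixes the apex w, since w is the only neighbour of the pendant vertex
  u_i^t of an isolated vertex i. Hence it preserves the distance to w; as u_x^s lies at distance
  t - s + 1 from w when x is not isolated, it preserves levels and restricts on level 0 to an
  automorphism of G. The copies of isolated vertices below level t have no neighbours and those on
  level t are pendant at w, so each of these two classes consists of mutual twins.

  Upper bound: a minimum determining set of G on level 0, the copies of T on levels 1..t and the
  copies of one isolated vertex outside T (which exists by minimality of T) on levels 1..t-1
  determine mu_t(G). Going up level by level, an automorphism fixing level s can only move
  u_y^(s+1) to the copy of a twin of y, and T forbids this.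

  Lower bound: a determining set S meets every pair of twins. On each level s >= 1 the twinned
  non-isolated vertices with copies in S, together with the isolated vertices of T, form a twin
  cover, so they number at least |T|; each class of isolated copies misses at most one vertex of S.
  The remaining vertices of S, projected to G and joined by all isolated vertices but one, form a
  determining set of G: an automorphism of G fixing them lifts to an automorphism of mu_t(G)
  fixing S, once it is replaced by the identity on twinned vertices above level 0.
\<close>

section \<open>Automorphisms, twins and determining sets\<close>

lemma automorphism_in: "automorphism V E f \<Longrightarrow> x \<in> V \<Longrightarrow> f x \<in> V"
  unfolding automorphism_def bij_betw_def by blast

lemma automorphism_surj:
  assumes "automorphism V E f" "y \<in> V"
  obtains x where "x \<in> V" "f x = y"
  using assms unfolding automorphism_def bij_betw_def by (metis imageE)

lemma automorphism_inj_on: "automorphism V E f \<Longrightarrow> inj_on f V"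
  unfolding automorphism_def bij_betw_def by blast

lemma automorphism_edge_iff:
  "automorphism V E f \<Longrightarrow> x \<in> V \<Longrightarrow> y \<in> V \<Longrightarrow> E (f x) (f y) \<longleftrightarrow> E x y"
  unfolding automorphism_def by blast

lemma automorphismI:
  assumes "finite V" "\<And>x. x \<in> V \<Longrightarrow> f x \<in> V" "inj_on f V"
    and "\<And>x y. x \<in> V \<Longrightarrow> y \<in> V \<Longrightarrow> E (f x) (f y) \<longleftrightarrow> E x y"
  shows "automorphism V E f"
  using assms endo_inj_surj[of V f] unfolding automorphism_def bij_betw_def by blast

lemma automorphism_open_nbhd:
  assumes f: "automorphism V E f" and x: "x \<in> V"
  shows "open_nbhd V E (f x) = f ` open_nbhd V E x"
proof
  show "f ` open_nbhd V E x \<subseteq> open_nbhd V E (f x)"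
  proof (rule image_subsetI)
    fix y assume "y \<in> open_nbhd V E x"
    then have "y \<in> V" "E x y" by (simp_all add: open_nbhd_def)
    then show "f y \<in> open_nbhd V E (f x)"
      using automorphism_edge_iff[OF f x] automorphism_in[OF f] by (simp add: open_nbhd_def)
  qed
  show "open_nbhd V E (f x) \<subseteq> f ` open_nbhd V E x"
  proof
    fix y assume y: "y \<in> open_nbhd V E (f x)"
    then have "y \<in> V" by (simp add: open_nbhd_def)
    with f obtain z where z: "z \<in> V" "f z = y" by (rule automorphism_surj)
    with y have "E x z" using automorphism_edge_iff[OF f x z(1)] by (simp add: open_nbhd_def)
    with z show "y \<in> f ` open_nbhd V E x" by (auto simp: open_nbhd_def)
  qed
qed

lemma card_open_nbhd_automorphism:
  assumes "automorphism V E f" "x \<in> V"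
  shows "card (open_nbhd V E (f x)) = card (open_nbhd V E x)"
proof -
  have "inj_on f (open_nbhd V E x)"
    using automorphism_inj_on[OF assms(1)] by (rule inj_on_subset) (auto simp: open_nbhd_def)
  then show ?thesis by (simp add: automorphism_open_nbhd[OF assms] card_image)
qed

lemma automorphism_twins:
  assumes "automorphism V E f" "twins V E x y"
  shows "twins V E (f x) (f y)"
  using assms(2) automorphism_open_nbhd[OF assms(1)] automorphism_in[OF assms(1)]
  unfolding twins_def by simp

lemma isolated_iff_open_nbhd: "isolated V E x \<longleftrightarrow> x \<in> V \<and> open_nbhd V E x = {}"
  unfolding isolated_def open_nbhd_def by blast

lemma automorphism_isolated_iff:
  assumes "automorphism V E f" "x \<in> V"
  shows "isolated V E (f x) \<longleftrightarrow> isolated V E x"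
  using assms automorphism_open_nbhd[OF assms] automorphism_in[OF assms]
  by (simp add: isolated_iff_open_nbhd)

lemma twins_refl: "x \<in> V \<Longrightarrow> twins V E x x"
  by (simp add: twins_def)

lemma twins_trans: "twins V E x y \<Longrightarrow> twins V E y z \<Longrightarrow> twins V E x z"
  unfolding twins_def by simp

lemma twins_sym: "twins V E x y \<Longrightarrow> twins V E y x"
  unfolding twins_def by simp

lemma twins_iff:
  assumes "simple_graph V E"
  shows "twins V E x y \<longleftrightarrow> x \<in> V \<and> y \<in> V \<and> (\<forall>z. E x z \<longleftrightarrow> E y z)"
  using assms unfolding twins_def open_nbhd_def simple_graph_def by blast

lemma transpose_twins_automorphism:
  assumes "simple_graph V E" "twins V E a b"
  shows "automorphism V E (transpose a b)"
proof -
  have sym: "E x y \<longleftrightarrow> E y x" for x y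
    using assms(1) unfolding simple_graph_def by blast
  have tw: "E a z \<longleftrightarrow> E b z" for z
    using assms(2) by (simp add: twins_iff[OF assms(1)])
  have left: "E (transpose a b x) y \<longleftrightarrow> E x y" for x y
    using tw by (cases "x = a"; cases "x = b") simp_all
  have "E (transpose a b x) (transpose a b y) \<longleftrightarrow> E x y" for x y
    using left[of x] left[of y] sym by metis
  moreover have "a \<in> V" "b \<in> V" using assms(2) by (simp_all add: twins_def)
  ultimately show ?thesis unfolding automorphism_def by simp
qed

lemma determining_set_twins:
  assumes "simple_graph V E" "determining_set V E S" "twins V E a b" "a \<noteq> b"
  shows "a \<in> S \<or> b \<in> S"
proof (rule ccontr)
  assume "\<not> (a \<in> S \<or> b \<in> S)"
  then have "\<forall>x\<in>S. transpose a b x = x" by (metis transpose_apply_other)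
  with assms(2) transpose_twins_automorphism[OF assms(1,3)]
  have "\<forall>x\<in>V. transpose a b x = x" unfolding determining_set_def by blast
  with assms(3,4) show False by (auto simp: twins_def)
qed

lemma card_twin_class_le:
  assumes "simple_graph V E" "determining_set V E S" "X \<subseteq> V"
    and "\<And>x y. x \<in> X \<Longrightarrow> y \<in> X \<Longrightarrow> twins V E x y"
  shows "card X \<le> card (X \<inter> S) + 1"
proof -
  have fin: "finite X" using assms(1,3) finite_subset unfolding simple_graph_def by blast
  have "card (X - S) \<le> 1"
    using determining_set_twins[OF assms(1,2)] assms(4) by (auto simp: card_le_Suc0_iff_eq fin)
  with card_Int_Diff[OF fin, of S] show ?thesis by simp
qed

lemma inj_on_fixes_all_but_one:
  assumes "inj_on f A" "f ` A \<subseteq> A" "\<And>a. a \<in> A \<Longrightarrow> a \<noteq> v \<Longrightarrow> f a = a" "a \<in> A"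
  shows "f a = a"
proof (rule ccontr)
  assume ne: "f a \<noteq> a"
  then have "a = v" using assms(3,4) by blast
  moreover have "f a \<in> A" using assms(2,4) by blast
  ultimately have "f (f a) = f a" using assms(3) ne by blast
  with assms(1,4) \<open>f a \<in> A\<close> ne show False by (meson inj_onD)
qed

lemma det_num_obtain:
  obtains S where "determining_set V E S" "card S = det_num V E"
proof -
  have "\<exists>n S. determining_set V E S \<and> card S = n"
    unfolding determining_set_def by blast
  then have "\<exists>S. determining_set V E S \<and> card S = det_num V E"
    unfolding det_num_def by (rule LeastI_ex)
  then show ?thesis using that by blast
qed

lemma det_num_le: "determining_set V E S \<Longrightarrow> det_num V E \<le> card S"
  unfolding det_num_def by (rule Least_le) blast

lemma open_nbhd_subset: "open_nbhd V E x \<subseteq> V"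
  by (auto simp: open_nbhd_def)

lemma two_le_card_open_nbhd:
  assumes "finite V" "u \<in> open_nbhd V E x" "v \<in> open_nbhd V E x" "u \<noteq> v"
  shows "2 \<le> card (open_nbhd V E x)"
proof -
  have "card {u, v} \<le> card (open_nbhd V E x)"
    using assms by (intro card_mono) (auto intro: finite_subset[OF open_nbhd_subset])
  with assms(4) show ?thesis by simp
qed

lemma isolated_twins: "isolated V E x \<Longrightarrow> isolated V E y \<Longrightarrow> twins V E x y"
  by (simp add: isolated_iff_open_nbhd twins_def)

lemma min_twin_cover_misses_isolated:
  assumes G: "simple_graph V E" and T: "min_twin_cover V E T" and i: "isolated V E i"
  obtains j where "isolated V E j" "j \<notin> T"
proof -
  have "\<exists>j. isolated V E j \<and> j \<notin> T"
  proof (rule ccontr)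
    assume "\<not> ?thesis"
    then have all_in: "isolated V E j \<Longrightarrow> j \<in> T" for j by blast
    have tc: "twin_cover V E T" using T by (simp add: min_twin_cover_def)
    then have cover: "\<forall>x y. twins V E x y \<and> x \<noteq> y \<longrightarrow> x \<in> T \<or> y \<in> T"
      by (simp add: twin_cover_def)
    have twin_of_i: "z \<in> T" if "twins V E z i" for z
      using that i all_in by (simp add: isolated_iff_open_nbhd twins_def)
    have "twin_cover V E (T - {i})"
      unfolding twin_cover_def
    proof (intro conjI allI impI)
      show "T - {i} \<subseteq> V" using tc by (auto simp: twin_cover_def)
      fix x y assume xy: "twins V E x y \<and> x \<noteq> y"
      then have "x \<in> T \<or> y \<in> T" by (rule cover[rule_format])
      moreover have "y \<in> T" if "x = i"
        using xy that twins_sym[of V E x y] by (intro twin_of_i) simp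
      moreover have "x \<in> T" if "y = i"
        using xy that by (intro twin_of_i) simp
      ultimately show "x \<in> T - {i} \<or> y \<in> T - {i}" using xy by auto
    qed
    with T have "card T \<le> card (T - {i})" by (simp add: min_twin_cover_def)
    moreover have "finite T"
      using tc G finite_subset by (auto simp: twin_cover_def simple_graph_def)
    ultimately show False using card_Diff1_less[of T i] all_in[OF i] by linarith
  qed
  with that show ?thesis by blast
qed

fun graph_ball :: "'a set \<Rightarrow> ('a \<Rightarrow> 'a \<Rightarrow> bool) \<Rightarrow> 'a \<Rightarrow> nat \<Rightarrow> 'a set" where
  "graph_ball V E c 0 = {c}"
| "graph_ball V E c (Suc j) = graph_ball V E c j \<union> {v \<in> V. \<exists>u \<in> graph_ball V E c j. E u v}"

lemma graph_ball_subset: "c \<in> V \<Longrightarrow> graph_ball V E c j \<subseteq> V"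
  by (induction j) auto

lemma automorphism_graph_ball:
  assumes f: "automorphism V E f" and c: "c \<in> V" "f c = c"
  shows "v \<in> V \<Longrightarrow> f v \<in> graph_ball V E c j \<longleftrightarrow> v \<in> graph_ball V E c j"
proof (induction j arbitrary: v)
  case 0
  then show ?case using c automorphism_inj_on[OF f] by (auto dest: inj_onD)
next
  case (Suc j)
  have "(\<exists>u \<in> graph_ball V E c j. E u (f v)) \<longleftrightarrow> (\<exists>u \<in> graph_ball V E c j. E u v)"
  proof
    assume "\<exists>u \<in> graph_ball V E c j. E u (f v)"
    then obtain u where u: "u \<in> graph_ball V E c j" "E u (f v)" by blast
    then have "u \<in> V" using graph_ball_subset[OF c(1)] by blast
    with f obtain u' where u': "u' \<in> V" "f u' = u" by (rule automorphism_surj)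
    with u Suc show "\<exists>u \<in> graph_ball V E c j. E u v"
      using automorphism_edge_iff[OF f u'(1) Suc.prems] by auto
  next
    assume "\<exists>u \<in> graph_ball V E c j. E u v"
    then obtain u where u: "u \<in> graph_ball V E c j" "E u v" by blast
    then have "u \<in> V" using graph_ball_subset[OF c(1)] by blast
    with u Suc show "\<exists>u \<in> graph_ball V E c j. E u (f v)"
      using automorphism_edge_iff[OF f \<open>u \<in> V\<close> Suc.prems] by auto
  qed
  then show ?case using Suc automorphism_in[OF f] by simp
qed

lemma automorphism_undo_on_twins:
  assumes G: "simple_graph V E" and \<phi>: "automorphism V E \<phi>" and N: "N \<subseteq> V"
    and inv: "\<And>x. x \<in> V \<Longrightarrow> \<phi> x \<in> N \<longleftrightarrow> x \<in> N"
    and tw: "\<And>x. x \<in> N \<Longrightarrow> twins V E x (\<phi> x)"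
  shows "automorphism V E (\<lambda>x. if x \<in> N then x else \<phi> x)" (is "automorphism V E ?\<psi>")
proof (rule automorphismI)
  show "finite V" using G by (simp add: simple_graph_def)
  show "?\<psi> x \<in> V" if "x \<in> V" for x
    using that N automorphism_in[OF \<phi>] by auto
  show "inj_on ?\<psi> V"
  proof (rule inj_onI)
    fix x y assume xy: "x \<in> V" "y \<in> V" "?\<psi> x = ?\<psi> y"
    then show "x = y"
      using inv automorphism_inj_on[OF \<phi>] by (auto split: if_splits dest: inj_onD)
  qed
  have sym: "E x y \<longleftrightarrow> E y x" for x y
    using G by (auto simp: simple_graph_def)
  have left: "E (?\<psi> x) z \<longleftrightarrow> E (\<phi> x) z" for x z
    using tw by (auto simp: twins_iff[OF G])
  show "E (?\<psi> x) (?\<psi> y) \<longleftrightarrow> E x y" if "x \<in> V" "y \<in> V" for x y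
    using left[of x] left[of y] sym automorphism_edge_iff[OF \<phi> that] by metis
qed

section \<open>The generalized Mycielskian\<close>

locale mycielskian =
  fixes V :: "'a set" and E :: "'a \<Rightarrow> 'a \<Rightarrow> bool" and t :: nat
  assumes simple: "simple_graph V E" and t_pos: "1 \<le> t"
begin

abbreviation W :: "('a \<times> nat) option set" where "W \<equiv> myc_verts V t"
abbreviation M :: "('a \<times> nat) option \<Rightarrow> ('a \<times> nat) option \<Rightarrow> bool" where "M \<equiv> myc_edge E V t"

definition Iso :: "'a set" where "Iso = {x. isolated V E x}"
definition NonIso :: "'a set" where "NonIso = {x. \<exists>y. E x y}"

definition layer :: "'a set \<Rightarrow> nat \<Rightarrow> ('a \<times> nat) option set" where
  "layer X s = (\<lambda>x. Some (x, s)) ` X"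

definition lower_iso_copies :: "('a \<times> nat) option set" where
  "lower_iso_copies = Some ` (Iso \<times> {..<t})"

definition pendants :: "('a \<times> nat) option set" where
  "pendants = layer Iso t"

lemma finite_V: "finite V"
  using simple by (simp add: simple_graph_def)

lemma edge_in_V: "E x y \<Longrightarrow> x \<in> V \<and> y \<in> V"
  using simple by (simp add: simple_graph_def)

lemma edge_sym: "E x y \<Longrightarrow> E y x"
  using simple by (simp add: simple_graph_def)

lemma edge_NonIso: "E x y \<Longrightarrow> x \<in> NonIso \<and> y \<in> NonIso"
  by (auto simp: NonIso_def dest: edge_sym)

lemma Iso_iff: "x \<in> Iso \<longleftrightarrow> x \<in> V \<and> (\<forall>y. \<not> E x y)"
  using edge_in_V by (auto simp: Iso_def isolated_def)

lemma NonIso_subset: "NonIso \<subseteq> V"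
  using edge_in_V by (auto simp: NonIso_def)

lemma Iso_subset: "Iso \<subseteq> V"
  by (auto simp: Iso_iff)

lemma V_cases:
  assumes "x \<in> V"
  obtains "x \<in> Iso" | "x \<in> NonIso"
  using assms by (auto simp: Iso_iff NonIso_def)

lemma not_Iso_NonIso: "x \<in> NonIso \<Longrightarrow> x \<notin> Iso"
  by (simp add: Iso_iff NonIso_def)

lemma NonIso_iff_not_isolated: "x \<in> NonIso \<longleftrightarrow> x \<in> V \<and> \<not> isolated V E x"
  using NonIso_subset by (auto simp: NonIso_def isolated_def dest: edge_in_V)

lemma Some_in_W [simp]: "Some (x, s) \<in> W \<longleftrightarrow> x \<in> V \<and> s \<le> t"
  by (auto simp: myc_verts_def)

lemma None_in_W [simp]: "None \<in> W"
  by (simp add: myc_verts_def)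

lemma finite_W: "finite W"
proof -
  have "W = Some ` (V \<times> {..t}) \<union> {None}"
    by (auto simp: myc_verts_def)
  then show ?thesis using finite_V by simp
qed

lemma myc_edge_sym: "M u v \<Longrightarrow> M v u"
  by (cases u; cases v) (auto dest: edge_sym)

lemma simple_graph_myc: "simple_graph W M"
proof -
  have "M u v \<Longrightarrow> u \<in> W \<and> v \<in> W" for u v
    by (cases u; cases v) (auto dest: edge_in_V)
  moreover have "\<not> M u u" for u
    using simple by (cases u) (auto simp: simple_graph_def)
  ultimately show ?thesis
    using finite_W myc_edge_sym unfolding simple_graph_def by blast
qed

lemma twins_layer:
  assumes "twins V E x y" "s \<le> t"
  shows "twins W M (Some (x, s)) (Some (y, s))"
proof -
  have "x \<in> V" "y \<in> V" "\<And>z. E x z \<longleftrightarrow> E y z"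
    using assms(1) by (simp_all add: twins_iff[OF simple])
  then have "M (Some (x, s)) v \<longleftrightarrow> M (Some (y, s)) v" for v
    by (cases v) auto
  with assms \<open>x \<in> V\<close> \<open>y \<in> V\<close> show ?thesis
    by (simp add: twins_iff[OF simple_graph_myc])
qed

lemma open_nbhd_lower_iso_copies: "v \<in> lower_iso_copies \<Longrightarrow> open_nbhd W M v = {}"
  by (auto simp: lower_iso_copies_def open_nbhd_def Iso_iff elim!: myc_edge.elims)

lemma open_nbhd_pendant: "v \<in> pendants \<Longrightarrow> open_nbhd W M v = {None}"
  by (auto simp: pendants_def layer_def open_nbhd_def Iso_iff elim!: myc_edge.elims)

lemma lower_iso_copies_subset: "lower_iso_copies \<subseteq> W"
  using Iso_subset by (auto simp: lower_iso_copies_def)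

lemma pendants_subset: "pendants \<subseteq> W"
  using Iso_subset by (auto simp: pendants_def layer_def)

lemma two_le_card_open_nbhd_NonIso:
  assumes "x \<in> NonIso" "s \<le> t"
  shows "2 \<le> card (open_nbhd W M (Some (x, s)))"
proof -
  obtain y where y: "E x y" using assms(1) by (auto simp: NonIso_def)
  then have "x \<in> V" "y \<in> V" using edge_in_V by blast+
  define below where "below = Some (y, s - 1)"
  define above where "above = (if s < t then Some (y, s + 1) else None)"
  have "below \<in> open_nbhd W M (Some (x, s))" "above \<in> open_nbhd W M (Some (x, s))"
    using y \<open>x \<in> V\<close> \<open>y \<in> V\<close> assms(2) t_pos
    by (auto simp: open_nbhd_def below_def above_def)
  moreover have "below \<noteq> above" by (auto simp: below_def above_def)
  ultimately show ?thesis by (rule two_le_card_open_nbhd[OF finite_W])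
qed

lemma two_le_card_open_nbhd_apex:
  assumes "a \<in> V" "b \<in> V" "a \<noteq> b"
  shows "2 \<le> card (open_nbhd W M None)"
  using assms by (intro two_le_card_open_nbhd[OF finite_W, of "Some (a, t)" _ _ "Some (b, t)"])
    (auto simp: open_nbhd_def)

lemma card_open_nbhd_eq_0_iff:
  assumes "a \<in> V" "v \<in> W"
  shows "card (open_nbhd W M v) = 0 \<longleftrightarrow> v \<in> lower_iso_copies"
proof
  assume deg: "card (open_nbhd W M v) = 0"
  then have empty: "open_nbhd W M v = {}"
    using finite_subset[OF open_nbhd_subset finite_W] by auto
  show "v \<in> lower_iso_copies"
  proof (cases v)
    case None
    with assms(1) have "Some (a, t) \<in> open_nbhd W M v" by (simp add: open_nbhd_def)
    with empty show ?thesis by simp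
  next
    case (Some p)
    then obtain x s where v: "v = Some (x, s)" "x \<in> V" "s \<le> t"
      using assms(2) by (cases p) auto
    then consider "x \<in> Iso" | "x \<in> NonIso" by (auto elim: V_cases)
    then show ?thesis
    proof cases
      case 1
      have "s \<noteq> t"
      proof
        assume "s = t"
        with v have "None \<in> open_nbhd W M v" by (simp add: open_nbhd_def)
        with empty show False by simp
      qed
      with 1 v show ?thesis by (auto simp: lower_iso_copies_def)
    next
      case 2
      with v deg two_le_card_open_nbhd_NonIso show ?thesis by fastforce
    qed
  qed
qed (simp add: open_nbhd_lower_iso_copies)

lemma card_open_nbhd_eq_1_iff:
  assumes "a \<in> V" "b \<in> V" "a \<noteq> b" "v \<in> W"
  shows "card (open_nbhd W M v) = 1 \<longleftrightarrow> v \<in> pendants"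
proof
  assume deg: "card (open_nbhd W M v) = 1"
  show "v \<in> pendants"
  proof (cases v)
    case None
    with deg two_le_card_open_nbhd_apex[OF assms(1-3)] show ?thesis by simp
  next
    case (Some p)
    then obtain x s where v: "v = Some (x, s)" "x \<in> V" "s \<le> t"
      using assms(4) by (cases p) auto
    then consider "x \<in> Iso" | "x \<in> NonIso" by (auto elim: V_cases)
    then show ?thesis
    proof cases
      case 1
      have "s = t"
      proof (rule ccontr)
        assume "s \<noteq> t"
        with 1 v have "v \<in> lower_iso_copies" by (auto simp: lower_iso_copies_def)
        with deg show False by (simp add: open_nbhd_lower_iso_copies)
      qed
      with 1 v show ?thesis by (simp add: pendants_def layer_def)
    next
      case 2
      with v deg two_le_card_open_nbhd_NonIso show ?thesis by fastforce
    qed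
  qed
qed (simp add: open_nbhd_pendant)

lemma automorphism_lower_iso_copies:
  assumes f: "automorphism W M f" and "a \<in> V"
  shows "f ` lower_iso_copies \<subseteq> lower_iso_copies"
proof (rule image_subsetI)
  fix v assume v: "v \<in> lower_iso_copies"
  then have "v \<in> W" using lower_iso_copies_subset by blast
  with v show "f v \<in> lower_iso_copies"
    using card_open_nbhd_automorphism[OF f] card_open_nbhd_eq_0_iff[OF assms(2)]
      automorphism_in[OF f] by metis
qed

lemma automorphism_pendants:
  assumes f: "automorphism W M f" and "a \<in> V" "b \<in> V" "a \<noteq> b"
  shows "f ` pendants \<subseteq> pendants"
proof (rule image_subsetI)
  fix v assume v: "v \<in> pendants"
  then have "v \<in> W" using pendants_subset by blast
  with v show "f v \<in> pendants"
    using card_open_nbhd_automorphism[OF f] card_open_nbhd_eq_1_iff[OF assms(2-4)]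
      automorphism_in[OF f] by metis
qed

lemma automorphism_fixes_apex:
  assumes f: "automorphism W M f" and "i \<in> Iso" "a \<in> V" "b \<in> V" "a \<noteq> b"
  shows "f None = None"
proof -
  have p: "Some (i, t) \<in> pendants" using assms(2) by (simp add: pendants_def layer_def)
  then have "f (Some (i, t)) \<in> pendants"
    using automorphism_pendants[OF f assms(3-5)] by blast
  then have "open_nbhd W M (f (Some (i, t))) = {None}" by (rule open_nbhd_pendant)
  moreover have "None \<in> open_nbhd W M (Some (i, t))"
    using open_nbhd_pendant[OF p] by simp
  ultimately show ?thesis
    using automorphism_open_nbhd[OF f] pendants_subset p by blast
qed

definition apex_ball :: "nat \<Rightarrow> ('a \<times> nat) option set" where
  "apex_ball j = insert None {Some (x, s) | x s. x \<in> V \<and> s \<le> t \<and> t < s + j \<and> (x \<in> NonIso \<or> s = t)}"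

lemma apex_ball_step_subset:
  "apex_ball j \<union> {v \<in> W. \<exists>u \<in> apex_ball j. M u v} \<subseteq> apex_ball (Suc j)"
proof -
  have "v \<in> apex_ball (Suc j)" if v: "v \<in> W" and u: "u \<in> apex_ball j" "M u v" for u v
  proof (cases u)
    case None
    with u v show ?thesis by (cases v) (auto simp: apex_ball_def)
  next
    case (Some p)
    with u obtain x s where x: "u = Some (x, s)" "t < s + j" by (auto simp: apex_ball_def)
    show ?thesis
    proof (cases v)
      case (Some q)
      then obtain y r where y: "v = Some (y, r)" by (cases q) auto
      with u x have "E x y" "r \<le> t" "s \<le> r + 1" by auto
      with x y show ?thesis by (auto simp: apex_ball_def dest: edge_NonIso edge_in_V)
    qed (simp add: apex_ball_def)
  qed
  moreover have "apex_ball j \<subseteq> apex_ball (Suc j)" by (auto simp: apex_ball_def)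
  ultimately show ?thesis by blast
qed

lemma apex_ball_subset_step:
  "apex_ball (Suc j) \<subseteq> apex_ball j \<union> {v \<in> W. \<exists>u \<in> apex_ball j. M u v}"
proof
  fix v assume v: "v \<in> apex_ball (Suc j)"
  show "v \<in> apex_ball j \<union> {v \<in> W. \<exists>u \<in> apex_ball j. M u v}"
  proof (cases "v \<in> apex_ball j")
    case False
    moreover have "None \<in> apex_ball j" by (simp add: apex_ball_def)
    ultimately obtain x s where
      xs: "v = Some (x, s)" "x \<in> V" "s \<le> t" "t < s + Suc j" "x \<in> NonIso \<or> s = t"
      using v by (auto simp: apex_ball_def)
    with False have "s + j = t" by (auto simp: apex_ball_def)
    from xs have "v \<in> W" by simp
    show ?thesis
    proof (cases "s = t")
      case True
      with xs have "M None v" by simp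
      with \<open>v \<in> W\<close> \<open>None \<in> apex_ball j\<close> show ?thesis by blast
    next
      case False
      with xs obtain y where y: "E x y" by (auto simp: NonIso_def)
      then have "y \<in> NonIso" "y \<in> V" by (auto dest: edge_NonIso edge_in_V)
      with xs False \<open>s + j = t\<close> have "Some (y, s + 1) \<in> apex_ball j" by (auto simp: apex_ball_def)
      moreover have "M (Some (y, s + 1)) v" using xs False y by (auto dest: edge_sym)
      ultimately show ?thesis using \<open>v \<in> W\<close> by blast
    qed
  qed simp
qed

lemma graph_ball_apex: "graph_ball W M None j = apex_ball j"
proof (induction j)
  case 0
  then show ?case by (auto simp: apex_ball_def)
next
  case (Suc j)
  then show ?case
    using apex_ball_step_subset[of j] apex_ball_subset_step[of j] by (simp only: graph_ball.simps)
qed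

lemma automorphism_preserves_level:
  assumes f: "automorphism W M f" "f None = None"
    and x: "x \<in> V" "s \<le> t" "x \<in> NonIso \<or> s = t"
  obtains y where "f (Some (x, s)) = Some (y, s)" "y \<in> V" "y \<in> NonIso \<or> s = t"
proof -
  have ball: "f (Some (x, s)) \<in> apex_ball j \<longleftrightarrow> Some (x, s) \<in> apex_ball j" for j
    using automorphism_graph_ball[OF f(1) None_in_W f(2)] x by (simp add: graph_ball_apex)
  have "Some (x, s) \<in> apex_ball (t - s + 1)" "Some (x, s) \<notin> apex_ball (t - s)"
    using x by (auto simp: apex_ball_def)
  then have inner: "f (Some (x, s)) \<in> apex_ball (t - s + 1)"
    and outer: "f (Some (x, s)) \<notin> apex_ball (t - s)"
    using ball by blast+
  moreover have "None \<in> apex_ball (t - s)" by (simp add: apex_ball_def)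
  ultimately obtain y r where y: "f (Some (x, s)) = Some (y, r)" "y \<in> V" "r \<le> t"
      "t < r + (t - s + 1)" "y \<in> NonIso \<or> r = t"
    by (auto simp: apex_ball_def)
  with outer have "\<not> t < r + (t - s)" by (auto simp: apex_ball_def)
  with y x have "f (Some (x, s)) = Some (y, s)" "y \<in> V" "y \<in> NonIso \<or> s = t" by auto
  with that show ?thesis by blast
qed

lemma level0_automorphism:
  assumes f: "automorphism W M f" "f None = None"
  obtains \<phi> where "automorphism V E \<phi>" "\<And>x. x \<in> NonIso \<Longrightarrow> f (Some (x, 0)) = Some (\<phi> x, 0)"
    "\<And>x. x \<in> Iso \<Longrightarrow> \<phi> x = x"
proof -
  define \<phi> where "\<phi> x = (if x \<in> NonIso then fst (the (f (Some (x, 0)))) else x)" for x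
  have on_NonIso: "f (Some (x, 0)) = Some (\<phi> x, 0) \<and> \<phi> x \<in> NonIso" if x: "x \<in> NonIso" for x
  proof -
    from x NonIso_subset have "x \<in> V" by blast
    then obtain y where "f (Some (x, 0)) = Some (y, 0)" "y \<in> NonIso \<or> 0 = t"
      using automorphism_preserves_level[OF f _ le0 disjI1[OF x]] by blast
    with x t_pos show ?thesis by (simp add: \<phi>_def)
  qed
  have off_NonIso: "\<phi> x = x" if "x \<notin> NonIso" for x
    using that by (simp add: \<phi>_def)
  have "automorphism V E \<phi>"
  proof (rule automorphismI[OF finite_V])
    show "\<phi> x \<in> V" if "x \<in> V" for x
      using that on_NonIso off_NonIso NonIso_subset by (cases "x \<in> NonIso") auto
    show "inj_on \<phi> V"
    proof (rule inj_onI)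
      fix x y assume xy: "x \<in> V" "y \<in> V" "\<phi> x = \<phi> y"
      show "x = y"
      proof (cases "x \<in> NonIso"; cases "y \<in> NonIso")
        assume "x \<in> NonIso" "y \<in> NonIso"
        with xy on_NonIso have "f (Some (x, 0)) = f (Some (y, 0))" by simp
        with xy automorphism_inj_on[OF f(1)] show "x = y" by (auto dest: inj_onD)
      qed (use xy on_NonIso off_NonIso in auto)
    qed
    show "E (\<phi> x) (\<phi> y) \<longleftrightarrow> E x y" if "x \<in> V" "y \<in> V" for x y
    proof (cases "x \<in> NonIso \<and> y \<in> NonIso")
      case True
      with that automorphism_edge_iff[OF f(1), of "Some (x, 0)" "Some (y, 0)"] on_NonIso
      show ?thesis by simp
    next
      case False
      with off_NonIso edge_NonIso show ?thesis by metis
    qed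
  qed
  moreover have "\<phi> x = x" if "x \<in> Iso" for x
    using that not_Iso_NonIso off_NonIso by blast
  ultimately show ?thesis using that on_NonIso by blast
qed

lemma level_succ_twin:
  assumes f: "automorphism W M f" "f None = None" and s: "Suc s \<le> t"
    and fixed: "\<And>x. x \<in> NonIso \<Longrightarrow> f (Some (x, s)) = Some (x, s)" and y: "y \<in> NonIso"
  obtains z where "f (Some (y, Suc s)) = Some (z, Suc s)" "twins V E y z"
proof -
  from y NonIso_subset have "y \<in> V" by blast
  then obtain z where z: "f (Some (y, Suc s)) = Some (z, Suc s)" "z \<in> V"
    using automorphism_preserves_level[OF f _ s disjI1[OF y]] by blast
  have "E u y \<longleftrightarrow> E u z" for u
  proof (cases "u \<in> NonIso")
    case True
    with NonIso_subset have "u \<in> V" by blast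
    have "E u y \<longleftrightarrow> M (Some (u, s)) (Some (y, Suc s))" using s by simp
    also have "\<dots> \<longleftrightarrow> M (f (Some (u, s))) (f (Some (y, Suc s)))"
      using automorphism_edge_iff[OF f(1)] \<open>u \<in> V\<close> \<open>y \<in> V\<close> s by simp
    also have "\<dots> \<longleftrightarrow> E u z" using fixed[OF True] z s by simp
    finally show ?thesis .
  next
    case False
    then show ?thesis using edge_NonIso by blast
  qed
  then have "twins V E y z"
    using \<open>y \<in> V\<close> z(2) edge_sym by (auto simp: twins_iff[OF simple])
  with z that show ?thesis by blast
qed

lemma automorphism_fixes_layer0:
  assumes f: "automorphism W M f" "f None = None" and D: "determining_set V E D"
    and fixes_D: "\<And>x. x \<in> D \<inter> NonIso \<Longrightarrow> f (Some (x, 0)) = Some (x, 0)"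
    and x: "x \<in> NonIso"
  shows "f (Some (x, 0)) = Some (x, 0)"
proof -
  obtain \<phi> where \<phi>: "automorphism V E \<phi>" "\<And>x. x \<in> NonIso \<Longrightarrow> f (Some (x, 0)) = Some (\<phi> x, 0)"
    "\<And>x. x \<in> Iso \<Longrightarrow> \<phi> x = x"
    using level0_automorphism[OF f] by blast
  have "\<phi> y = y" if "y \<in> D" for y
  proof -
    have "y \<in> V" using that D by (auto simp: determining_set_def)
    then show ?thesis
      using that fixes_D \<phi>(2,3) by (cases rule: V_cases) auto
  qed
  then have "\<forall>y\<in>V. \<phi> y = y"
    using D \<phi>(1) by (auto simp: determining_set_def)
  with x \<phi>(2) NonIso_subset show ?thesis by auto
qed

lemma automorphism_fixes_NonIso_layers:
  assumes f: "automorphism W M f" "f None = None"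
    and T: "twin_cover V E T" and D: "determining_set V E D"
    and fixes_D: "\<And>x. x \<in> D \<inter> NonIso \<Longrightarrow> f (Some (x, 0)) = Some (x, 0)"
    and fixes_T: "\<And>x s. x \<in> T \<Longrightarrow> 1 \<le> s \<Longrightarrow> s \<le> t \<Longrightarrow> f (Some (x, s)) = Some (x, s)"
    and "s \<le> t" "x \<in> NonIso"
  shows "f (Some (x, s)) = Some (x, s)"
  using assms(7,8)
proof (induction s arbitrary: x)
  case 0
  then show ?case using automorphism_fixes_layer0[OF f D fixes_D] by simp
next
  case (Suc s)
  obtain z where z: "f (Some (x, Suc s)) = Some (z, Suc s)" "twins V E x z"
    using level_succ_twin[OF f Suc.prems(1)] Suc.IH Suc.prems by (metis Suc_leD)
  show ?case
  proof (rule ccontr)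
    assume ne: "f (Some (x, Suc s)) \<noteq> Some (x, Suc s)"
    with z have "x \<noteq> z" by blast
    with T z(2) have "x \<in> T \<or> z \<in> T" by (auto simp: twin_cover_def)
    then show False
    proof
      assume "x \<in> T"
      with fixes_T Suc.prems ne show False by simp
    next
      assume "z \<in> T"
      with fixes_T Suc.prems have "f (Some (z, Suc s)) = f (Some (x, Suc s))"
        using z(1) by simp
      moreover have "z \<in> V" "x \<in> V" using z(2) by (auto simp: twins_def)
      ultimately show False
        using automorphism_inj_on[OF f(1)] Suc.prems \<open>x \<noteq> z\<close> by (auto dest: inj_onD)
    qed
  qed
qed

subsection \<open>Upper bound\<close>

definition upper_set :: "'a set \<Rightarrow> 'a set \<Rightarrow> 'a \<Rightarrow> ('a \<times> nat) option set" where
  "upper_set D T i = layer D 0 \<union> Some ` (T \<times> {1..t}) \<union> (\<lambda>s. Some (i, s)) ` {1..<t}"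

lemma card_upper_set:
  assumes "finite D" "finite T" "i \<notin> T"
  shows "card (upper_set D T i) = card D + t * card T + (t - 1)"
proof -
  have "card (layer D 0) = card D"
    by (simp add: layer_def card_image inj_on_def)
  moreover have "card (Some ` (T \<times> {1..t})) = t * card T"
    by (simp add: card_image card_cartesian_product)
  moreover have "card ((\<lambda>s. Some (i, s)) ` {1..<t}) = t - 1"
    by (simp add: card_image inj_on_def)
  moreover have "layer D 0 \<inter> Some ` (T \<times> {1..t}) = {}"
    "(layer D 0 \<union> Some ` (T \<times> {1..t})) \<inter> (\<lambda>s. Some (i, s)) ` {1..<t} = {}"
    using assms(3) by (auto simp: layer_def)
  ultimately show ?thesis
    using assms(1,2) by (simp add: upper_set_def card_Un_disjoint layer_def)
qed

lemma isolated_in_twin_cover: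
  assumes "twin_cover V E T" "i \<in> Iso" "i \<notin> T" "x \<in> Iso" "x \<noteq> i"
  shows "x \<in> T"
  using assms isolated_twins[of V E x i] by (auto simp: twin_cover_def Iso_def)

lemma upper_set_fixes_pendants:
  assumes T: "twin_cover V E T" and i: "i \<in> Iso" "i \<notin> T" and ab: "a \<in> V" "b \<in> V" "a \<noteq> b"
    and f: "automorphism W M f" and fixed: "\<And>v. v \<in> upper_set D T i \<Longrightarrow> f v = v"
    and v: "v \<in> pendants"
  shows "f v = v"
proof (rule inj_on_fixes_all_but_one[OF inj_on_subset[OF automorphism_inj_on[OF f] pendants_subset]
      automorphism_pendants[OF f ab] _ v])
  fix u assume "u \<in> pendants" "u \<noteq> Some (i, t)"
  then obtain x where "u = Some (x, t)" "x \<in> Iso" "x \<noteq> i"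
    by (auto simp: pendants_def layer_def)
  with isolated_in_twin_cover[OF T i] t_pos show "f u = u"
    by (intro fixed) (auto simp: upper_set_def)
qed

lemma upper_set_fixes_lower_iso_copies:
  assumes T: "twin_cover V E T" and i: "i \<in> Iso" "i \<notin> T" and D: "determining_set V E D"
    and f: "automorphism W M f" and fixed: "\<And>v. v \<in> upper_set D T i \<Longrightarrow> f v = v"
    and v: "v \<in> lower_iso_copies"
  shows "f v = v"
proof -
  obtain j where j: "Iso - D \<subseteq> {j}"
  proof -
    have "x = y" if "x \<in> Iso - D" "y \<in> Iso - D" for x y
      using that determining_set_twins[OF simple D isolated_twins[of V E x y]]
      by (auto simp: Iso_def)
    then show ?thesis using that by (cases "Iso - D = {}") blast+
  qed
  have "i \<in> V" using i(1) Iso_subset by blast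
  show ?thesis
  proof (rule inj_on_fixes_all_but_one[OF inj_on_subset[OF automorphism_inj_on[OF f]
        lower_iso_copies_subset] automorphism_lower_iso_copies[OF f \<open>i \<in> V\<close>] _ v])
    fix u assume "u \<in> lower_iso_copies" "u \<noteq> Some (j, 0)"
    then obtain x s where u: "u = Some (x, s)" "x \<in> Iso" "s < t" "s = 0 \<longrightarrow> x \<noteq> j"
      by (auto simp: lower_iso_copies_def)
    with j isolated_in_twin_cover[OF T i, of x] have "u \<in> upper_set D T i"
      by (cases "s = 0"; cases "x = i") (auto simp: upper_set_def layer_def)
    then show "f u = u" by (rule fixed)
  qed
qed

lemma upper_set_determining:
  assumes T: "twin_cover V E T" and i: "i \<in> Iso" "i \<notin> T"
    and ab: "a \<in> V" "b \<in> V" "a \<noteq> b" and D: "determining_set V E D"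
  shows "determining_set W M (upper_set D T i)"
proof -
  have "f v = v" if f: "automorphism W M f" and fixed: "\<And>v. v \<in> upper_set D T i \<Longrightarrow> f v = v"
    and v: "v \<in> W" for f v
  proof -
    have apex: "f None = None" by (rule automorphism_fixes_apex[OF f i(1) ab])
    have upper: "f (Some (x, s)) = Some (x, s)" if "x \<in> NonIso" "s \<le> t" for x s
      using automorphism_fixes_NonIso_layers[OF f apex T D _ _ that(2,1)] fixed
      by (auto simp: upper_set_def layer_def)
    show ?thesis
    proof (cases v)
      case (Some p)
      then obtain x s where xs: "v = Some (x, s)" "x \<in> V" "s \<le> t" using v by (cases p) auto
      from xs(2) show ?thesis
      proof (cases rule: V_cases)
        case 1
        with xs upper_set_fixes_pendants[OF T i ab f fixed]
          upper_set_fixes_lower_iso_copies[OF T i D f fixed]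
        show ?thesis
          by (cases "s = t") (auto simp: lower_iso_copies_def pendants_def layer_def)
      qed (use xs upper in simp)
    qed (simp add: apex)
  qed
  moreover have "upper_set D T i \<subseteq> W"
    using D T i(1) Iso_subset by (auto simp: upper_set_def layer_def determining_set_def twin_cover_def)
  ultimately show ?thesis by (auto simp: determining_set_def)
qed

subsection \<open>Lower bound\<close>

definition twinned :: "'a set" where
  "twinned = {x \<in> NonIso. \<exists>y. y \<noteq> x \<and> twins V E x y}"

lemma twinned_subset: "twinned \<subseteq> NonIso"
  by (auto simp: twinned_def)

lemma automorphism_twinned:
  assumes \<phi>: "automorphism V E \<phi>" and x: "x \<in> V"
  shows "\<phi> x \<in> twinned \<longleftrightarrow> x \<in> twinned"
proof -
  have inj: "inj_on \<phi> V" by (rule automorphism_inj_on[OF \<phi>])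
  have "finite twinned"
    using finite_subset[OF twinned_subset] finite_subset[OF NonIso_subset finite_V] by blast
  moreover have "\<phi> ` twinned \<subseteq> twinned"
  proof (rule image_subsetI)
    fix x assume "x \<in> twinned"
    then obtain y where x: "x \<in> NonIso" and y: "y \<noteq> x" "twins V E x y"
      by (auto simp: twinned_def)
    have V: "x \<in> V" "y \<in> V" using y(2) by (auto simp: twins_def)
    have "\<phi> x \<in> NonIso"
      using x V automorphism_isolated_iff[OF \<phi>] automorphism_in[OF \<phi>]
      by (simp add: NonIso_iff_not_isolated)
    moreover have "\<phi> y \<noteq> \<phi> x" using inj V y(1) by (auto dest: inj_onD)
    ultimately show "\<phi> x \<in> twinned"
      using automorphism_twins[OF \<phi> y(2)] by (auto simp: twinned_def)
  qed
  moreover have "inj_on \<phi> twinned"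
    using inj_on_subset[OF inj] twinned_subset NonIso_subset by blast
  ultimately have "\<phi> ` twinned = twinned" by (rule endo_inj_surj)
  then show ?thesis
    using x inj twinned_subset NonIso_subset by (auto dest: inj_onD)
qed

definition lift :: "('a \<Rightarrow> 'a) \<Rightarrow> ('a \<Rightarrow> 'a) \<Rightarrow> ('a \<times> nat) option \<Rightarrow> ('a \<times> nat) option" where
  "lift \<phi> \<psi> = map_option (\<lambda>(x, s). (if s = 0 then \<phi> x else \<psi> x, s))"

lemma lift_simps [simp]:
  "lift \<phi> \<psi> None = None"
  "lift \<phi> \<psi> (Some (x, s)) = Some (if s = 0 then \<phi> x else \<psi> x, s)"
  by (simp_all add: lift_def)

lemma lift_automorphism:
  assumes \<phi>: "automorphism V E \<phi>" and \<psi>: "automorphism V E \<psi>"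
    and tw: "\<And>x. x \<in> V \<Longrightarrow> twins V E (\<phi> x) (\<psi> x)"
  shows "automorphism W M (lift \<phi> \<psi>)"
proof (rule automorphismI[OF finite_W])
  define \<chi> where "\<chi> s x = (if s = 0 then \<phi> x else \<psi> x)" for s :: nat and x
  have lift_Some: "lift \<phi> \<psi> (Some (x, s)) = Some (\<chi> s x, s)" for x s
    by (simp add: \<chi>_def)
  have \<chi>_V: "x \<in> V \<Longrightarrow> \<chi> s x \<in> V" for s x
    using automorphism_in[OF \<phi>] automorphism_in[OF \<psi>] by (simp add: \<chi>_def)
  have \<chi>_inj: "x \<in> V \<Longrightarrow> y \<in> V \<Longrightarrow> \<chi> s x = \<chi> s y \<Longrightarrow> x = y" for s x y
    using automorphism_inj_on[OF \<phi>] automorphism_inj_on[OF \<psi>]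
    by (auto simp: \<chi>_def split: if_splits dest: inj_onD)
  have \<chi>_left: "E (\<chi> s x) z \<longleftrightarrow> E (\<phi> x) z" if "x \<in> V" for s x z
    using tw[OF that] by (auto simp: \<chi>_def twins_iff[OF simple])
  have \<chi>_edge: "E (\<chi> s x) (\<chi> r y) \<longleftrightarrow> E x y" if "x \<in> V" "y \<in> V" for s r x y
    using \<chi>_left[OF that(1)] \<chi>_left[OF that(2)] automorphism_edge_iff[OF \<phi> that] edge_sym
    by metis
  show "lift \<phi> \<psi> v \<in> W" if "v \<in> W" for v
    using that \<chi>_V by (cases v) (auto simp: lift_Some simp del: lift_simps(2))
  show "inj_on (lift \<phi> \<psi>) W"
  proof (rule inj_onI)
    fix u v assume uv: "u \<in> W" "v \<in> W" "lift \<phi> \<psi> u = lift \<phi> \<psi> v"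
    then show "u = v"
      using \<chi>_inj by (cases u; cases v) (auto simp: lift_Some simp del: lift_simps(2))
  qed
  show "M (lift \<phi> \<psi> u) (lift \<phi> \<psi> v) \<longleftrightarrow> M u v" if "u \<in> W" "v \<in> W" for u v
    using that \<chi>_V \<chi>_edge by (cases u; cases v) (auto simp: lift_Some simp del: lift_simps(2))
qed

definition base_set :: "('a \<times> nat) option set \<Rightarrow> 'a \<Rightarrow> 'a set" where
  "base_set S i = {x \<in> NonIso. Some (x, 0) \<in> S}
     \<union> {x \<in> NonIso - twinned. \<exists>s \<in> {1..t}. Some (x, s) \<in> S} \<union> (Iso - {i})"

lemma automorphism_maps_twinned_to_twin:
  assumes S: "determining_set W M S" and \<phi>: "automorphism V E \<phi>"
    and fixed: "\<And>x. x \<in> NonIso \<Longrightarrow> Some (x, 0) \<in> S \<Longrightarrow> \<phi> x = x"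
    and x: "x \<in> twinned"
  shows "twins V E x (\<phi> x)"
proof -
  obtain y where y: "y \<noteq> x" "twins V E x y" and "x \<in> NonIso"
    using x by (auto simp: twinned_def)
  then have "y \<in> NonIso"
    using twins_iff[OF simple] by (auto simp: NonIso_def)
  have "Some (x, 0) \<in> S \<or> Some (y, 0) \<in> S"
    using y(1) by (intro determining_set_twins[OF simple_graph_myc S twins_layer[OF y(2) le0]]) simp
  moreover have "twins V E x x"
    using \<open>x \<in> NonIso\<close> NonIso_subset by (intro twins_refl) auto
  ultimately obtain z where "z \<in> NonIso" "Some (z, 0) \<in> S" "twins V E x z"
    using \<open>x \<in> NonIso\<close> \<open>y \<in> NonIso\<close> y(2) by (elim disjE) blast+
  with fixed have z: "twins V E x z" "\<phi> z = z" by blast+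
  have "twins V E (\<phi> x) z"
    using automorphism_twins[OF \<phi> z(1)] z(2) by simp
  with z(1) show ?thesis by (blast intro: twins_trans twins_sym)
qed

definition undo_twinned :: "('a \<Rightarrow> 'a) \<Rightarrow> 'a \<Rightarrow> 'a" where
  "undo_twinned \<phi> y = (if y \<in> twinned then y else \<phi> y)"

lemma lift_undo_twinned_automorphism:
  assumes \<phi>: "automorphism V E \<phi>" and tw: "\<And>y. y \<in> twinned \<Longrightarrow> twins V E y (\<phi> y)"
  shows "automorphism W M (lift \<phi> (undo_twinned \<phi>))"
proof (rule lift_automorphism[OF \<phi>])
  show "automorphism V E (undo_twinned \<phi>)"
    unfolding undo_twinned_def using twinned_subset NonIso_subset
    by (intro automorphism_undo_on_twins[OF simple \<phi>] automorphism_twinned[OF \<phi>] tw) auto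
  show "twins V E (\<phi> y) (undo_twinned \<phi> y)" if "y \<in> V" for y
    using tw automorphism_in[OF \<phi> that] by (auto simp: undo_twinned_def intro: twins_sym twins_refl)
qed

lemma lift_undo_twinned_fixes:
  assumes "S \<subseteq> W" "v \<in> S" and iso: "\<And>y. y \<in> Iso \<Longrightarrow> \<phi> y = y"
    and fixed: "\<And>x. x \<in> base_set S i \<Longrightarrow> \<phi> x = x"
  shows "lift \<phi> (undo_twinned \<phi>) v = v"
proof (cases v)
  case (Some p)
  with assms(1,2) obtain y s where v: "v = Some (y, s)" "y \<in> V" "s \<le> t"
    by (cases p) auto
  from v(2) show ?thesis
  proof (cases rule: V_cases)
    case 1
    with iso twinned_subset not_Iso_NonIso have "\<phi> y = y" "undo_twinned \<phi> y = y"
      by (auto simp: undo_twinned_def)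
    with v show ?thesis by simp
  next
    case 2
    have "\<phi> y = y" if "s = 0"
      using 2 assms(2) v that fixed by (auto simp: base_set_def)
    moreover have "undo_twinned \<phi> y = y" if "s \<noteq> 0"
    proof (cases "y \<in> twinned")
      case False
      with 2 assms(2) v \<open>s \<noteq> 0\<close> have "y \<in> base_set S i"
        unfolding base_set_def by (auto intro!: bexI[of _ s])
      with False fixed show ?thesis by (simp add: undo_twinned_def)
    qed (simp add: undo_twinned_def)
    ultimately show ?thesis using v by simp
  qed
qed simp

lemma base_set_determining:
  assumes S: "determining_set W M S" and i: "i \<in> Iso"
  shows "determining_set V E (base_set S i)"
proof -
  have "\<phi> x = x"
    if \<phi>: "automorphism V E \<phi>" and fixed: "\<And>x. x \<in> base_set S i \<Longrightarrow> \<phi> x = x" and x: "x \<in> V"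
    for \<phi> x
  proof -
    have "\<phi> ` Iso \<subseteq> Iso"
      using automorphism_isolated_iff[OF \<phi>] Iso_subset by (auto simp: Iso_def)
    then have iso: "\<phi> y = y" if "y \<in> Iso" for y
      using inj_on_fixes_all_but_one[OF inj_on_subset[OF automorphism_inj_on[OF \<phi>] Iso_subset], of i]
        fixed that by (auto simp: base_set_def)
    have "twins V E y (\<phi> y)" if "y \<in> twinned" for y
      using automorphism_maps_twinned_to_twin[OF S \<phi> _ that] fixed by (auto simp: base_set_def)
    with \<phi> have "automorphism W M (lift \<phi> (undo_twinned \<phi>))"
      by (rule lift_undo_twinned_automorphism)
    moreover have "lift \<phi> (undo_twinned \<phi>) v = v" if "v \<in> S" for v
      using S that iso fixed by (intro lift_undo_twinned_fixes) (auto simp: determining_set_def)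
    ultimately have "\<forall>v\<in>W. lift \<phi> (undo_twinned \<phi>) v = v"
      using S unfolding determining_set_def by blast
    then have "lift \<phi> (undo_twinned \<phi>) (Some (x, 0)) = Some (x, 0)" by (rule bspec) (simp add: x)
    then show ?thesis by simp
  qed
  moreover have "base_set S i \<subseteq> V"
    using NonIso_subset Iso_subset by (auto simp: base_set_def)
  ultimately show ?thesis by (auto simp: determining_set_def)
qed

definition upper_untwinned :: "('a \<times> nat) option set" where
  "upper_untwinned = Some ` ((NonIso - twinned) \<times> {1..t})"

lemma card_lower_iso_copies_le:
  assumes S: "determining_set W M S"
  shows "card Iso * t \<le> card (lower_iso_copies \<inter> S) + 1"
proof -
  have "card lower_iso_copies = card Iso * t"
    by (simp add: lower_iso_copies_def card_image card_cartesian_product)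
  moreover have "twins W M u v" if "u \<in> lower_iso_copies" "v \<in> lower_iso_copies" for u v
    using that lower_iso_copies_subset open_nbhd_lower_iso_copies by (auto simp: twins_def)
  ultimately show ?thesis
    using card_twin_class_le[OF simple_graph_myc S lower_iso_copies_subset] by (simp add: Int_commute)
qed

lemma card_pendants_le:
  assumes S: "determining_set W M S"
  shows "card Iso \<le> card (pendants \<inter> S) + 1"
proof -
  have "card pendants = card Iso"
    by (simp add: pendants_def layer_def card_image inj_on_def)
  moreover have "twins W M u v" if "u \<in> pendants" "v \<in> pendants" for u v
    using that pendants_subset open_nbhd_pendant by (auto simp: twins_def)
  ultimately show ?thesis
    using card_twin_class_le[OF simple_graph_myc S pendants_subset] by (simp add: Int_commute)
qed

lemma card_layer_inter: "card (layer X s \<inter> S) = card {x \<in> X. Some (x, s) \<in> S}"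
proof -
  have "layer X s \<inter> S = (\<lambda>x. Some (x, s)) ` {x \<in> X. Some (x, s) \<in> S}"
    by (auto simp: layer_def)
  then show ?thesis by (simp add: card_image inj_on_def)
qed

lemma card_min_twin_cover_le_layer:
  assumes S: "determining_set W M S" and T: "min_twin_cover V E T" and s: "s \<le> t"
  shows "card T \<le> card (layer twinned s \<inter> S) + card (T \<inter> Iso)"
proof -
  define X where "X = {x \<in> twinned. Some (x, s) \<in> S} \<union> (T \<inter> Iso)"
  have "twin_cover V E X"
    unfolding twin_cover_def
  proof (intro conjI allI impI)
    show "X \<subseteq> V" using twinned_subset NonIso_subset Iso_subset by (auto simp: X_def)
    fix x y assume xy: "twins V E x y \<and> x \<noteq> y"
    then have V: "x \<in> V" "y \<in> V" and nb: "\<And>z. E x z \<longleftrightarrow> E y z"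
      by (auto simp: twins_iff[OF simple])
    from V(1) show "x \<in> X \<or> y \<in> X"
    proof (cases rule: V_cases)
      case 1
      with V nb have "y \<in> Iso" by (simp add: Iso_iff)
      moreover have "x \<in> T \<or> y \<in> T"
        using T xy by (auto simp: min_twin_cover_def twin_cover_def)
      ultimately show ?thesis using 1 by (auto simp: X_def)
    next
      case 2
      then obtain z where "E x z" by (auto simp: NonIso_def)
      with nb have "y \<in> NonIso" by (auto simp: NonIso_def)
      with 2 xy twins_sym[of V E x y] have "x \<in> twinned" "y \<in> twinned"
        by (auto simp: twinned_def)
      moreover have "Some (x, s) \<in> S \<or> Some (y, s) \<in> S"
        using xy by (intro determining_set_twins[OF simple_graph_myc S twins_layer[OF _ s]]) auto
      ultimately show ?thesis by (auto simp: X_def)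
    qed
  qed
  with T have "card T \<le> card X" by (simp add: min_twin_cover_def)
  also have "\<dots> \<le> card {x \<in> twinned. Some (x, s) \<in> S} + card (T \<inter> Iso)"
    unfolding X_def by (rule card_Un_le)
  finally show ?thesis by (simp add: card_layer_inter)
qed

lemma det_num_le_base_parts:
  assumes S: "determining_set W M S" and i: "i \<in> Iso"
  shows "det_num V E \<le> card (layer NonIso 0 \<inter> S) + card (upper_untwinned \<inter> S) + (card Iso - 1)"
proof -
  let ?proj = "\<lambda>v. fst (the v)"
  have finS: "finite S" using S finite_W finite_subset by (auto simp: determining_set_def)
  have "base_set S i \<subseteq> ?proj ` (layer NonIso 0 \<inter> S) \<union> ?proj ` (upper_untwinned \<inter> S) \<union> (Iso - {i})"
  proof
    fix x assume "x \<in> base_set S i"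
    then consider "x \<in> NonIso" "Some (x, 0) \<in> S"
      | s where "x \<in> NonIso - twinned" "s \<in> {1..t}" "Some (x, s) \<in> S" | "x \<in> Iso - {i}"
      by (auto simp: base_set_def)
    then show "x \<in> ?proj ` (layer NonIso 0 \<inter> S) \<union> ?proj ` (upper_untwinned \<inter> S) \<union> (Iso - {i})"
    proof cases
      case 1
      then have "Some (x, 0) \<in> layer NonIso 0 \<inter> S" by (simp add: layer_def)
      then show ?thesis by (auto intro: image_eqI[of _ _ "Some (x, 0)"])
    next
      case (2 s)
      then have "Some (x, s) \<in> upper_untwinned \<inter> S" by (simp add: upper_untwinned_def)
      then show ?thesis by (auto intro: image_eqI[of _ _ "Some (x, s)"])
    qed simp
  qed
  then have "card (base_set S i)
      \<le> card (?proj ` (layer NonIso 0 \<inter> S) \<union> ?proj ` (upper_untwinned \<inter> S) \<union> (Iso - {i}))"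
    using finS finite_subset[OF Iso_subset finite_V] by (intro card_mono) auto
  also have "\<dots> \<le> card (?proj ` (layer NonIso 0 \<inter> S)) + card (?proj ` (upper_untwinned \<inter> S))
      + card (Iso - {i})"
    by (meson add_le_mono card_Un_le le_refl order_trans)
  also have "\<dots> \<le> card (layer NonIso 0 \<inter> S) + card (upper_untwinned \<inter> S) + (card Iso - 1)"
    using finS i by (intro add_mono card_image_le) auto
  finally show ?thesis
    using det_num_le[OF base_set_determining[OF S i]] by linarith
qed

lemma card_parts_le:
  assumes S: "determining_set W M S"
  shows "card (layer NonIso 0 \<inter> S) + card (lower_iso_copies \<inter> S) + card (pendants \<inter> S)
    + (\<Sum>s = 1..t. card (layer twinned s \<inter> S)) + card (upper_untwinned \<inter> S) \<le> card S"
proof -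
  have finS: "finite S" using S finite_W finite_subset by (auto simp: determining_set_def)
  define A0 where "A0 = layer NonIso 0 \<inter> S"
  define AJ where "AJ = lower_iso_copies \<inter> S"
  define AP where "AP = pendants \<inter> S"
  define AN where "AN = (\<Union>s \<in> {1..t}. layer twinned s \<inter> S)"
  define AU where "AU = upper_untwinned \<inter> S"
  have sub: "A0 \<subseteq> S" "AJ \<subseteq> S" "AP \<subseteq> S" "AN \<subseteq> S" "AU \<subseteq> S"
    by (auto simp: A0_def AJ_def AP_def AN_def AU_def)
  then have fin: "finite A0" "finite AJ" "finite AP" "finite AN" "finite AU"
    using finS finite_subset by blast+
  have "card AN = (\<Sum>s = 1..t. card (layer twinned s \<inter> S))"
    unfolding AN_def using finS by (intro card_UN_disjoint) (auto simp: layer_def)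
  moreover have "Iso \<inter> NonIso = {}" "twinned \<inter> Iso = {}" "twinned \<inter> (NonIso - twinned) = {}"
    using not_Iso_NonIso twinned_subset by auto
  then have "A0 \<inter> AJ = {}" "(A0 \<union> AJ) \<inter> AP = {}" "(A0 \<union> AJ \<union> AP) \<inter> AN = {}"
      "(A0 \<union> AJ \<union> AP \<union> AN) \<inter> AU = {}"
    using t_pos by (auto simp: A0_def AJ_def AP_def AN_def AU_def layer_def lower_iso_copies_def
        pendants_def upper_untwinned_def)
  then have "card (A0 \<union> AJ \<union> AP \<union> AN \<union> AU) = card A0 + card AJ + card AP + card AN + card AU"
    using fin by (simp add: card_Un_disjoint)
  moreover have "card (A0 \<union> AJ \<union> AP \<union> AN \<union> AU) \<le> card S"
    using finS sub by (intro card_mono) auto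
  ultimately show ?thesis by (simp add: A0_def AJ_def AP_def AU_def)
qed

lemma card_min_twin_cover_Iso_less:
  assumes T: "min_twin_cover V E T" and i: "i \<in> Iso"
  shows "card (T \<inter> Iso) < card Iso"
proof -
  obtain j where "isolated V E j" "j \<notin> T"
    using min_twin_cover_misses_isolated[OF simple T] i by (auto simp: Iso_def)
  then have "T \<inter> Iso \<subset> Iso" by (auto simp: Iso_def)
  then show ?thesis using finite_subset[OF Iso_subset finite_V] by (rule psubset_card_mono[rotated])
qed

lemma card_determining_set_ge:
  assumes S: "determining_set W M S" and T: "min_twin_cover V E T" and i: "i \<in> Iso"
  shows "t * card T + det_num V E + t - 1 \<le> card S"
proof -
  have layers: "t * card T \<le> (\<Sum>s = 1..t. card (layer twinned s \<inter> S)) + t * card (T \<inter> Iso)"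
  proof -
    have "t * card T = (\<Sum>s = 1..t. card T)" by simp
    also have "\<dots> \<le> (\<Sum>s = 1..t. card (layer twinned s \<inter> S) + card (T \<inter> Iso))"
      by (intro sum_mono card_min_twin_cover_le_layer[OF S T]) simp
    finally show ?thesis by (simp add: sum.distrib)
  qed
  have "card (T \<inter> Iso) + 1 \<le> card Iso"
    using card_min_twin_cover_Iso_less[OF T i] by simp
  then have "t * (card (T \<inter> Iso) + 1) \<le> t * card Iso"
    by (rule mult_le_mono2)
  then have "t * card (T \<inter> Iso) + t \<le> t * card Iso"
    by (simp add: algebra_simps)
  moreover have "card Iso * t \<le> card (lower_iso_copies \<inter> S) + 1"
    by (rule card_lower_iso_copies_le[OF S])
  ultimately show ?thesis
    using card_parts_le[OF S] det_num_le_base_parts[OF S i] card_pendants_le[OF S] layers t_pos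
      \<open>card (T \<inter> Iso) + 1 \<le> card Iso\<close> by (simp add: mult.commute)
qed

end

theorem mainTheorem6:
  fixes V :: "'a set" and E :: "'a \<Rightarrow> 'a \<Rightarrow> bool" and T :: "'a set" and t :: nat
  assumes "simple_graph V E"
    and "\<exists>x y. x \<noteq> y \<and> twins V E x y"
    and "\<exists>x. isolated V E x"
    and "min_twin_cover V E T"
    and "t \<ge> 1"
  shows "det_num (myc_verts V t) (myc_edge E V t) = t * card T + det_num V E + t - 1"
proof -
  interpret mycielskian V E t using assms(1,5) by unfold_locales
  obtain a b where "a \<noteq> b" "twins V E a b" using assms(2) by blast
  then have ab: "a \<in> V" "b \<in> V" "a \<noteq> b" by (simp_all add: twins_def)
  obtain i where i: "i \<in> Iso" "i \<notin> T"
    using min_twin_cover_misses_isolated[OF simple assms(4)] assms(3) by (auto simp: Iso_def)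
  have T: "twin_cover V E T" using assms(4) by (simp add: min_twin_cover_def)
  obtain D where D: "determining_set V E D" "card D = det_num V E"
    by (rule det_num_obtain)
  have "finite D" "finite T"
    using D T finite_subset[OF _ finite_V] by (auto simp: determining_set_def twin_cover_def)
  have "det_num W M \<le> card (upper_set D T i)"
    by (rule det_num_le[OF upper_set_determining[OF T i ab D(1)]])
  also have "\<dots> = det_num V E + t * card T + (t - 1)"
    using card_upper_set[OF \<open>finite D\<close> \<open>finite T\<close> i(2)] D(2) by simp
  finally have upper: "det_num W M \<le> det_num V E + t * card T + (t - 1)" .
  obtain S where S: "determining_set W M S" "card S = det_num W M"
    by (rule det_num_obtain)
  have lower: "t * card T + det_num V E + t - 1 \<le> det_num W M"
    using card_determining_set_ge[OF S(1) assms(4) i(1)] S(2) by simp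
  show ?thesis using upper lower t_pos by linarith
qed

end
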